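(* Let $X$ be a real Banach space and $A: X\rightrightarrows X^*$ a maximal monotone operator with $\mathcal{F}_A=\{F_A\}$. Then for every $\lambda_1,\lambda_2>0$ and $(w,w^* )\in X\times X^*$, the operator $\widehat{A}$ with graph \[ \mathrm{Gr}(\widehat{A}) = \{(\lambda_1 x - w,\ \lambda_2 x^* - w^* ): (x,x^* )\in\mathrm{Gr}(A)\} \] is maximal monotone and satisfies $\mathcal{F}_{\widehat{A}} = \{F_{\widehat{A}}\}$.
   Context: For a maximal monotone $A$, a representative function is a proper convex lsc $h: X\times X^*\to\mathbb{R}\cup\{+\infty\}$ with $h(x,x^* )\ge\langle x,x^*\rangle$ for all $(x,x^* )$ and equality on $\mathrm{Gr}(A)$; $\mathcal{F}_A$ is the set of all such functions. $F_A(x,x^* ) = \sup_{(y,y^* )\in\mathrm{Gr}(A)}\{\langle y,x^*\rangle + \langle x,y^*\rangle - \langle y,y^*\rangle\}$ is the Fitzpatrick function. *)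

theory Defs
  imports "HOL-Analysis.Analysis"
begin

(* The dual space X* is modelled as the space of bounded linear functionals
  'a <Rightarrow><^sub>L real; the duality pairing is blinfun_apply. A (set-valued) operator
  A : X <rightrightarrows> X* is identified with its graph, a subset of X <times> X*. *)

definition pairing :: "'a::real_normed_vector \<Rightarrow> ('a \<Rightarrow>\<^sub>L real) \<Rightarrow> real" where
  "pairing x xs = blinfun_apply xs x"

definition monotone_op :: "('a::real_normed_vector \<times> ('a \<Rightarrow>\<^sub>L real)) set \<Rightarrow> bool" where
  "monotone_op G \<longleftrightarrow>
     (\<forall>(x, xs)\<in>G. \<forall>(y, ys)\<in>G. pairing (x - y) (xs - ys) \<ge> 0)"

definition maximal_monotone :: "('a::real_normed_vector \<times> ('a \<Rightarrow>\<^sub>L real)) set \<Rightarrow> bool" where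
  "maximal_monotone G \<longleftrightarrow> monotone_op G \<and> (\<forall>G'. monotone_op G' \<and> G \<subseteq> G' \<longrightarrow> G' = G)"

definition proper_fun :: "('b \<Rightarrow> ereal) \<Rightarrow> bool" where
  "proper_fun h \<longleftrightarrow> (\<forall>p. h p \<noteq> -\<infinity>) \<and> (\<exists>p. h p \<noteq> \<infinity>)"

definition convex_efun :: "('b::real_vector \<Rightarrow> ereal) \<Rightarrow> bool" where
  "convex_efun h \<longleftrightarrow>
     (\<forall>p q. \<forall>t::real. 0 < t \<and> t < 1 \<longrightarrow>
        h (t *\<^sub>R p + (1 - t) *\<^sub>R q) \<le> ereal t * h p + ereal (1 - t) * h q)"

(* Lower semicontinuity (w.r.t. the norm topology): all sublevel sets are closed. *)
definition lsc_efun :: "('b::topological_space \<Rightarrow> ereal) \<Rightarrow> bool" where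
  "lsc_efun h \<longleftrightarrow> (\<forall>c::ereal. closed {p. h p \<le> c})"

definition representative_functions ::
  "('a::real_normed_vector \<times> ('a \<Rightarrow>\<^sub>L real)) set \<Rightarrow> ('a \<times> ('a \<Rightarrow>\<^sub>L real) \<Rightarrow> ereal) set" where
  "representative_functions G =
     {h. proper_fun h \<and> convex_efun h \<and> lsc_efun h
         \<and> (\<forall>x xs. h (x, xs) \<ge> ereal (pairing x xs))
         \<and> (\<forall>(x, xs)\<in>G. h (x, xs) = ereal (pairing x xs))}"

definition fitzpatrick ::
  "('a::real_normed_vector \<times> ('a \<Rightarrow>\<^sub>L real)) set \<Rightarrow> 'a \<times> ('a \<Rightarrow>\<^sub>L real) \<Rightarrow> ereal" where
  "fitzpatrick G = (\<lambda>(x, xs). SUP (y, ys)\<in>G. ereal (pairing y xs + pairing x ys - pairing y ys))"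

end

(* For T (x, xs) = (l1 x - w, l2 xs - ws) with l1 l2 > 0, both T and its inverse, an affine
   rescaling of the same shape, preserve monotonicity; hence T maps maximal monotone graphs to
   maximal monotone graphs. The identity <x, xs> = <T (x, xs)> / (l1 l2) + c (x, xs), with c
   affine and continuous, shows that h |-> (h o T) / (l1 l2) + c sends representative functions
   of T ` A injectively to representative functions of A. Since F_A is the only representative
   function of A, all representative functions of T ` A, among them F_(T ` A), have the same
   image and therefore coincide. *)

theory Submission
  imports Defs
begin

lemma pairing_add_left: "pairing (x + y) xs = pairing x xs + pairing y xs"
  unfolding pairing_def by (simp add: blinfun.add_right)

lemma pairing_add_right: "pairing x (xs + ys) = pairing x xs + pairing x ys"
  unfolding pairing_def by (simp add: blinfun.add_left)

lemma pairing_diff_left: "pairing (x - y) xs = pairing x xs - pairing y xs"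
  unfolding pairing_def by (simp add: blinfun.diff_right)

lemma pairing_diff_right: "pairing x (xs - ys) = pairing x xs - pairing x ys"
  unfolding pairing_def by (simp add: blinfun.diff_left)

lemma pairing_scaleR_left: "pairing (a *\<^sub>R x) xs = a * pairing x xs"
  unfolding pairing_def by (simp add: blinfun.scaleR_right)

lemma pairing_scaleR_right: "pairing x (a *\<^sub>R xs) = a * pairing x xs"
  unfolding pairing_def by (simp add: blinfun.scaleR_left)

lemma pairing_zero_left: "pairing 0 xs = 0"
  unfolding pairing_def by simp

lemma pairing_zero_right: "pairing x 0 = 0"
  unfolding pairing_def by simp

lemmas pairing_simps = pairing_zero_left pairing_zero_right pairing_add_left pairing_add_right
  pairing_diff_left pairing_diff_right pairing_scaleR_left pairing_scaleR_right

lemma pairing_diff_swap: "pairing (y - x) (ys - xs) = pairing (x - y) (xs - ys)"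
  by (simp add: pairing_simps)

lemma pairing_scaleR_diff:
  "pairing (a *\<^sub>R x - a *\<^sub>R y) (b *\<^sub>R xs - b *\<^sub>R ys) = a * b * pairing (x - y) (xs - ys)"
  by (simp flip: scaleR_diff_right add: pairing_scaleR_left pairing_scaleR_right)

lemma continuous_on_pairing [continuous_intros]:
  "continuous_on S f \<Longrightarrow> continuous_on S g \<Longrightarrow> continuous_on S (\<lambda>p. pairing (f p) (g p))"
  unfolding pairing_def by (intro continuous_intros)

lemma fitzpatrick_upper:
  "(y, ys) \<in> G \<Longrightarrow> ereal (pairing y xs + pairing x ys - pairing y ys) \<le> fitzpatrick G (x, xs)"
  unfolding fitzpatrick_def by (auto intro!: SUP_upper2)

lemma fitzpatrick_le_pairing_iff:
  "fitzpatrick G (x, xs) \<le> ereal (pairing x xs) \<longleftrightarrow> (\<forall>(y, ys)\<in>G. 0 \<le> pairing (x - y) (xs - ys))"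
proof -
  have "ereal (pairing y xs + pairing x ys - pairing y ys) \<le> ereal (pairing x xs)
      \<longleftrightarrow> 0 \<le> pairing (x - y) (xs - ys)" for y ys
    by (simp add: pairing_simps) arith
  then show ?thesis unfolding fitzpatrick_def prod.case SUP_le_iff by (simp add: case_prod_beta)
qed

lemma fitzpatrick_eq_pairing:
  assumes "monotone_op G" "(x, xs) \<in> G"
  shows "fitzpatrick G (x, xs) = ereal (pairing x xs)"
proof (rule antisym)
  show "fitzpatrick G (x, xs) \<le> ereal (pairing x xs)"
    using assms unfolding fitzpatrick_le_pairing_iff monotone_op_def by blast
  show "ereal (pairing x xs) \<le> fitzpatrick G (x, xs)"
    using fitzpatrick_upper[OF assms(2), where x=x and xs=xs] by simp
qed

lemma maximal_monotone_memI:
  assumes "maximal_monotone G" and "\<forall>(y, ys)\<in>G. 0 \<le> pairing (x - y) (xs - ys)"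
  shows "(x, xs) \<in> G"
proof -
  have "monotone_op G" using assms(1) unfolding maximal_monotone_def by blast
  then have "monotone_op (insert (x, xs) G)"
    using assms(2) unfolding monotone_op_def by (auto simp: pairing_diff_swap pairing_zero_left)
  then show ?thesis using assms(1) unfolding maximal_monotone_def by blast
qed

lemma fitzpatrick_ge_pairing:
  assumes "maximal_monotone G"
  shows "ereal (pairing x xs) \<le> fitzpatrick G (x, xs)"
proof (rule ccontr)
  assume less: "\<not> ?thesis"
  then have "fitzpatrick G (x, xs) \<le> ereal (pairing x xs)" by simp
  then have "(x, xs) \<in> G"
    using assms by (intro maximal_monotone_memI) (auto simp: fitzpatrick_le_pairing_iff)
  moreover have "monotone_op G" using assms unfolding maximal_monotone_def by blast
  ultimately show False
    using fitzpatrick_eq_pairing[of G x xs] less by simp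
qed

lemma maximal_monotone_nonempty:
  assumes "maximal_monotone G"
  shows "G \<noteq> {}"
proof
  assume "G = {}"
  have "monotone_op {(0, 0)}" unfolding monotone_op_def by (simp add: pairing_zero_left)
  with assms \<open>G = {}\<close> show False unfolding maximal_monotone_def by blast
qed

lemma ereal_convex_comb_le:
  assumes "0 \<le> t" "t \<le> 1" "ereal a \<le> P" "ereal b \<le> Q"
  shows "ereal (t * a + (1 - t) * b) \<le> ereal t * P + ereal (1 - t) * Q"
proof -
  have "ereal (t * a + (1 - t) * b) = ereal t * ereal a + ereal (1 - t) * ereal b" by simp
  also have "\<dots> \<le> ereal t * P + ereal (1 - t) * Q"
    using assms by (intro add_mono ereal_mult_left_mono) auto
  finally show ?thesis .
qed

lemma convex_efun_fitzpatrick: "convex_efun (fitzpatrick G)"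
  unfolding convex_efun_def
proof (intro allI impI)
  fix p q :: "'a \<times> ('a \<Rightarrow>\<^sub>L real)" and t :: real
  assume t: "0 < t \<and> t < 1"
  obtain x xs z zs where pq: "p = (x, xs)" "q = (z, zs)" by fastforce
  have "ereal (pairing y (t *\<^sub>R xs + (1 - t) *\<^sub>R zs) + pairing (t *\<^sub>R x + (1 - t) *\<^sub>R z) ys - pairing y ys)
      \<le> ereal t * fitzpatrick G (x, xs) + ereal (1 - t) * fitzpatrick G (z, zs)"
    if "(y, ys) \<in> G" for y ys
  proof -
    have "pairing y (t *\<^sub>R xs + (1 - t) *\<^sub>R zs) + pairing (t *\<^sub>R x + (1 - t) *\<^sub>R z) ys - pairing y ys
        = t * (pairing y xs + pairing x ys - pairing y ys) + (1 - t) * (pairing y zs + pairing z ys - pairing y ys)"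
      by (simp add: pairing_simps algebra_simps)
    then show ?thesis
      using t fitzpatrick_upper[OF that] by (simp add: ereal_convex_comb_le)
  qed
  then show "fitzpatrick G (t *\<^sub>R p + (1 - t) *\<^sub>R q)
      \<le> ereal t * fitzpatrick G p + ereal (1 - t) * fitzpatrick G q"
    unfolding pq by (subst (1) fitzpatrick_def) (auto intro!: SUP_least)
qed

lemma closed_Collect_ereal_le:
  fixes f :: "'b::topological_space \<Rightarrow> real"
  assumes "continuous_on UNIV f"
  shows "closed {p. ereal (f p) \<le> c}"
proof (cases c)
  case (real r)
  then show ?thesis using closed_Collect_le[OF assms continuous_on_const, of r] by simp
qed auto

lemma lsc_efun_fitzpatrick: "lsc_efun (fitzpatrick G)"
  unfolding lsc_efun_def
proof
  fix c :: ereal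
  have "{p. fitzpatrick G p \<le> c}
      = (\<Inter>(y, ys)\<in>G. {p. ereal (pairing y (snd p) + pairing (fst p) ys - pairing y ys) \<le> c})"
    unfolding fitzpatrick_def by (auto simp: SUP_le_iff split: prod.splits)
  also have "closed \<dots>"
    by (intro closed_INT ballI) (auto intro!: closed_Collect_ereal_le continuous_intros)
  finally show "closed {p. fitzpatrick G p \<le> c}" .
qed

lemma fitzpatrick_in_representative_functions:
  assumes "maximal_monotone G"
  shows "fitzpatrick G \<in> representative_functions G"
proof -
  have mono: "monotone_op G" using assms unfolding maximal_monotone_def by blast
  obtain x xs where "(x, xs) \<in> G" using maximal_monotone_nonempty[OF assms] by auto
  then have "fitzpatrick G (x, xs) \<noteq> \<infinity>" using fitzpatrick_eq_pairing[OF mono] by simp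
  moreover have "fitzpatrick G p \<noteq> -\<infinity>" for p
    using fitzpatrick_ge_pairing[OF assms, of "fst p" "snd p"] by auto
  ultimately have "proper_fun (fitzpatrick G)" unfolding proper_fun_def by blast
  then show ?thesis
    unfolding representative_functions_def
    using convex_efun_fitzpatrick lsc_efun_fitzpatrick fitzpatrick_ge_pairing[OF assms]
      fitzpatrick_eq_pairing[OF mono] by auto
qed

lemma proper_fun_pullback:
  assumes "proper_fun h" "surj T" "0 < m"
  shows "proper_fun (\<lambda>p. ereal m * h (T p) + ereal (c p))"
  unfolding proper_fun_def
proof (intro conjI allI)
  have not_MInf: "h q \<noteq> -\<infinity>" for q using assms(1) unfolding proper_fun_def by blast
  show "ereal m * h (T p) + ereal (c p) \<noteq> -\<infinity>" for p
    using not_MInf[of "T p"] assms(3) by (cases "h (T p)") auto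
  obtain q where q: "h q \<noteq> \<infinity>" using assms(1) unfolding proper_fun_def by blast
  obtain p where "T p = q" using assms(2) by (metis surjD)
  then have "ereal m * h (T p) + ereal (c p) \<noteq> \<infinity>"
    using q not_MInf[of q] by (cases "h q") auto
  then show "\<exists>p. ereal m * h (T p) + ereal (c p) \<noteq> \<infinity>" ..
qed

lemma convex_efun_pullback:
  assumes "convex_efun h" "\<forall>q. h q \<noteq> -\<infinity>" "0 < m"
    and T: "\<And>p q t. T (t *\<^sub>R p + (1 - t) *\<^sub>R q) = t *\<^sub>R T p + (1 - t) *\<^sub>R T q"
    and c: "\<And>p q t. c (t *\<^sub>R p + (1 - t) *\<^sub>R q) = t * c p + (1 - t) * c q"
  shows "convex_efun (\<lambda>p. ereal m * h (T p) + ereal (c p))"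
  unfolding convex_efun_def
proof (intro allI impI)
  fix p q and t :: real
  assume t: "0 < t \<and> t < 1"
  have "ereal m * h (T (t *\<^sub>R p + (1 - t) *\<^sub>R q)) + ereal (c (t *\<^sub>R p + (1 - t) *\<^sub>R q))
      = ereal m * h (t *\<^sub>R T p + (1 - t) *\<^sub>R T q) + ereal (t * c p + (1 - t) * c q)"
    unfolding T c ..
  also have "\<dots> \<le> ereal m * (ereal t * h (T p) + ereal (1 - t) * h (T q)) + ereal (t * c p + (1 - t) * c q)"
    using assms(1,3) t unfolding convex_efun_def by (intro add_right_mono ereal_mult_left_mono) auto
  also have "\<dots> = ereal t * (ereal m * h (T p) + ereal (c p)) + ereal (1 - t) * (ereal m * h (T q) + ereal (c q))"
    using assms(2,3) t by (cases "h (T p)"; cases "h (T q)") (auto simp: algebra_simps)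
  finally show "ereal m * h (T (t *\<^sub>R p + (1 - t) *\<^sub>R q)) + ereal (c (t *\<^sub>R p + (1 - t) *\<^sub>R q))
      \<le> ereal t * (ereal m * h (T p) + ereal (c p)) + ereal (1 - t) * (ereal m * h (T q) + ereal (c q))" .
qed

lemma lsc_efun_closed_epigraph:
  fixes h :: "'b::first_countable_topology \<Rightarrow> ereal"
  assumes "lsc_efun h"
  shows "closed {z. h (fst z) \<le> ereal (snd z)}"
  unfolding closed_sequential_limits
proof (intro allI impI, elim conjE)
  fix z :: "nat \<Rightarrow> 'b \<times> real" and l
  assume epi: "\<forall>n. z n \<in> {z. h (fst z) \<le> ereal (snd z)}" and lim: "z \<longlonglongrightarrow> l"
  have "h (fst l) \<le> ereal (snd l) + ereal e" if "0 < e" for e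
  proof -
    have "eventually (\<lambda>n. snd (z n) < snd l + e) sequentially"
      using order_tendstoD(2)[OF tendsto_snd[OF lim], of "snd l + e"] that by simp
    moreover have "h (fst (z n)) \<le> ereal (snd l + e)" if "snd (z n) < snd l + e" for n
      using epi that by (metis mem_Collect_eq order_trans ereal_less_eq(3) less_imp_le)
    ultimately have "eventually (\<lambda>n. fst (z n) \<in> {p. h p \<le> ereal (snd l + e)}) sequentially"
      by (auto elim: eventually_mono)
    then have "fst l \<in> {p. h p \<le> ereal (snd l + e)}"
      using Lim_in_closed_set[OF _ _ trivial_limit_sequentially tendsto_fst[OF lim]] assms
      unfolding lsc_efun_def by blast
    then show ?thesis by simp
  qed
  then show "l \<in> {z. h (fst z) \<le> ereal (snd z)}" by (auto intro: ereal_le_epsilon2)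
qed

lemma lsc_efun_pullback:
  fixes h :: "'b::first_countable_topology \<Rightarrow> ereal" and T :: "'a::topological_space \<Rightarrow> 'b"
  assumes "lsc_efun h" "\<forall>q. h q \<noteq> -\<infinity>" "0 < m"
    and "continuous_on UNIV T" "continuous_on UNIV c"
  shows "lsc_efun (\<lambda>p. ereal m * h (T p) + ereal (c p))"
  unfolding lsc_efun_def
proof
  fix r :: ereal
  show "closed {p. ereal m * h (T p) + ereal (c p) \<le> r}"
  proof (cases r)
    case (real s)
    have "ereal m * h (T p) + ereal (c p) \<le> ereal s \<longleftrightarrow> h (T p) \<le> ereal ((s - c p) / m)" for p
      using assms(2,3) by (cases "h (T p)") (auto simp: field_simps)
    then have "{p. ereal m * h (T p) + ereal (c p) \<le> r}
        = (\<lambda>p. (T p, (s - c p) / m)) -` {z. h (fst z) \<le> ereal (snd z)}"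
      using real by auto
    also have "closed \<dots>"
      using lsc_efun_closed_epigraph[OF assms(1)] assms(3-5)
      by (intro closed_vimage continuous_intros) auto
    finally show ?thesis .
  qed (use assms(2,3) in \<open>auto simp: ereal_mult_eq_MInfty\<close>)
qed

lemma ereal_mult_add_cancel:
  fixes a b :: ereal
  assumes "0 < m" "ereal m * a + ereal c = ereal m * b + ereal c"
  shows "a = b"
  using assms by (cases a; cases b) auto

definition affine_rescale :: "real \<Rightarrow> real \<Rightarrow> 'a::real_vector \<Rightarrow> 'b::real_vector \<Rightarrow> 'a \<times> 'b \<Rightarrow> 'a \<times> 'b" where
  "affine_rescale l1 l2 w ws = (\<lambda>(x, xs). (l1 *\<^sub>R x - w, l2 *\<^sub>R xs - ws))"

lemma affine_rescale_inverse_left: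
  "l1 \<noteq> 0 \<Longrightarrow> l2 \<noteq> 0 \<Longrightarrow>
     affine_rescale (inverse l1) (inverse l2) (- (w /\<^sub>R l1)) (- (ws /\<^sub>R l2)) (affine_rescale l1 l2 w ws p) = p"
  unfolding affine_rescale_def by (auto split: prod.splits simp: scaleR_diff_right)

lemma affine_rescale_inverse_right:
  "l1 \<noteq> 0 \<Longrightarrow> l2 \<noteq> 0 \<Longrightarrow>
     affine_rescale l1 l2 w ws (affine_rescale (inverse l1) (inverse l2) (- (w /\<^sub>R l1)) (- (ws /\<^sub>R l2)) p) = p"
  unfolding affine_rescale_def by (auto split: prod.splits simp: scaleR_add_right)

lemma surj_affine_rescale: "0 < l1 * l2 \<Longrightarrow> surj (affine_rescale l1 l2 w ws)"
  by (metis surjI affine_rescale_inverse_right mult_eq_0_iff less_irrefl)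

lemma affine_rescale_convex_comb:
  "affine_rescale l1 l2 w ws (t *\<^sub>R p + (1 - t) *\<^sub>R q)
     = t *\<^sub>R affine_rescale l1 l2 w ws p + (1 - t) *\<^sub>R affine_rescale l1 l2 w ws q"
  unfolding affine_rescale_def by (auto split: prod.splits simp: algebra_simps)

lemma continuous_on_affine_rescale:
  "continuous_on S (affine_rescale l1 l2 (w::'a::real_normed_vector) (ws::'b::real_normed_vector))"
  unfolding affine_rescale_def case_prod_beta by (intro continuous_intros)

lemma monotone_op_affine_rescale:
  assumes "monotone_op G" "0 \<le> l1 * l2"
  shows "monotone_op (affine_rescale l1 l2 w ws ` G)"
  using assms unfolding monotone_op_def affine_rescale_def
  by (fastforce simp: pairing_scaleR_diff)

lemma maximal_monotone_affine_rescale: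
  fixes G :: "('a::real_normed_vector \<times> ('a \<Rightarrow>\<^sub>L real)) set"
  assumes "maximal_monotone G" "0 < l1 * l2"
  shows "maximal_monotone (affine_rescale l1 l2 w ws ` G)"
  unfolding maximal_monotone_def
proof (intro conjI allI impI)
  let ?T = "affine_rescale l1 l2 w ws"
    and ?S = "affine_rescale (inverse l1) (inverse l2) (- (w /\<^sub>R l1)) (- (ws /\<^sub>R l2))"
  have l: "l1 \<noteq> 0" "l2 \<noteq> 0" using assms(2) by auto
  show "monotone_op (?T ` G)"
    using assms monotone_op_affine_rescale unfolding maximal_monotone_def by fastforce
  fix G' assume "monotone_op G' \<and> ?T ` G \<subseteq> G'"
  then have G': "monotone_op G'" "?T ` G \<subseteq> G'" by auto
  have "monotone_op (?S ` G')"
    using assms(2) by (intro monotone_op_affine_rescale[OF G'(1)]) (simp flip: inverse_mult_distrib)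
  moreover have "G \<subseteq> ?S ` G'"
  proof
    fix p assume "p \<in> G"
    then have "?S (?T p) \<in> ?S ` G'" using G'(2) by blast
    then show "p \<in> ?S ` G'" unfolding affine_rescale_inverse_left[OF l] .
  qed
  ultimately have "?S ` G' = G"
    using assms(1) unfolding maximal_monotone_def by blast
  then have "?T ` G = ?T ` ?S ` G'" by simp
  also have "\<dots> = G'" by (simp add: image_image affine_rescale_inverse_right[OF l])
  finally show "G' = ?T ` G" ..
qed

definition rescale_correction ::
    "real \<Rightarrow> real \<Rightarrow> 'a::real_normed_vector \<Rightarrow> ('a \<Rightarrow>\<^sub>L real) \<Rightarrow> 'a \<times> ('a \<Rightarrow>\<^sub>L real) \<Rightarrow> real" where
  "rescale_correction l1 l2 w ws =
     (\<lambda>(x, xs). pairing x ws / l2 + pairing w xs / l1 - pairing w ws / (l1 * l2))"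

lemma pairing_affine_rescale:
  assumes "l1 \<noteq> 0" "l2 \<noteq> 0"
  shows "pairing x xs
    = pairing (l1 *\<^sub>R x - w) (l2 *\<^sub>R xs - ws) / (l1 * l2) + rescale_correction l1 l2 w ws (x, xs)"
  using assms unfolding rescale_correction_def by (simp add: pairing_simps field_simps)

lemma rescale_correction_convex_comb:
  "rescale_correction l1 l2 w ws (t *\<^sub>R p + (1 - t) *\<^sub>R q)
     = t * rescale_correction l1 l2 w ws p + (1 - t) * rescale_correction l1 l2 w ws q"
proof -
  obtain x xs z zs where "p = (x, xs)" "q = (z, zs)" by fastforce
  then show ?thesis
    unfolding rescale_correction_def
    by (simp add: pairing_simps add_divide_distrib diff_divide_distrib algebra_simps)
qed

lemma continuous_on_rescale_correction: "continuous_on S (rescale_correction l1 l2 w ws)"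
  unfolding rescale_correction_def case_prod_beta divide_inverse by (intro continuous_intros)

definition rescale_pullback ::
    "real \<Rightarrow> real \<Rightarrow> 'a::real_normed_vector \<Rightarrow> ('a \<Rightarrow>\<^sub>L real)
      \<Rightarrow> ('a \<times> ('a \<Rightarrow>\<^sub>L real) \<Rightarrow> ereal) \<Rightarrow> 'a \<times> ('a \<Rightarrow>\<^sub>L real) \<Rightarrow> ereal" where
  "rescale_pullback l1 l2 w ws h =
     (\<lambda>p. ereal (1 / (l1 * l2)) * h (affine_rescale l1 l2 w ws p) + ereal (rescale_correction l1 l2 w ws p))"

lemma rescale_pullback_in_representative_functions:
  assumes l: "0 < l1 * l2" and h: "h \<in> representative_functions (affine_rescale l1 l2 w ws ` G)"
  shows "rescale_pullback l1 l2 w ws h \<in> representative_functions G"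
proof -
  have l12: "l1 \<noteq> 0" "l2 \<noteq> 0" and m: "0 < 1 / (l1 * l2)" using l by auto
  have proper: "proper_fun h" and conv: "convex_efun h" and lsc: "lsc_efun h"
    and ge: "\<And>x xs. ereal (pairing x xs) \<le> h (x, xs)"
    and eq: "\<And>x xs. (x, xs) \<in> affine_rescale l1 l2 w ws ` G \<Longrightarrow> h (x, xs) = ereal (pairing x xs)"
    using h unfolding representative_functions_def by auto
  have not_MInf: "\<forall>q. h q \<noteq> -\<infinity>" using proper unfolding proper_fun_def by blast
  have pairing_eq: "ereal (pairing x xs)
      = ereal (1 / (l1 * l2)) * ereal (pairing (l1 *\<^sub>R x - w) (l2 *\<^sub>R xs - ws))
        + ereal (rescale_correction l1 l2 w ws (x, xs))" for x xs
    using pairing_affine_rescale[OF l12, of x xs w ws] by simp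
  have "ereal (pairing x xs) \<le> rescale_pullback l1 l2 w ws h (x, xs)" for x xs
    unfolding pairing_eq[of x xs] rescale_pullback_def affine_rescale_def prod.case
    using m ge by (intro add_right_mono ereal_mult_left_mono) auto
  moreover have "rescale_pullback l1 l2 w ws h (x, xs) = ereal (pairing x xs)" if "(x, xs) \<in> G" for x xs
    using eq[of "l1 *\<^sub>R x - w" "l2 *\<^sub>R xs - ws"] that
    unfolding pairing_eq[of x xs] rescale_pullback_def by (force simp: affine_rescale_def)
  ultimately show ?thesis
    unfolding representative_functions_def rescale_pullback_def
    using proper_fun_pullback[OF proper surj_affine_rescale[OF l] m]
      convex_efun_pullback[OF conv not_MInf m affine_rescale_convex_comb[of l1 l2 w ws]
        rescale_correction_convex_comb[of l1 l2 w ws]]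
      lsc_efun_pullback[OF lsc not_MInf m continuous_on_affine_rescale[of UNIV l1 l2 w ws]
        continuous_on_rescale_correction[of UNIV l1 l2 w ws]]
    by auto
qed

lemma rescale_pullback_inject:
  assumes "0 < l1 * l2" and "rescale_pullback l1 l2 w ws h = rescale_pullback l1 l2 w ws f"
  shows "h = f"
proof
  fix q
  obtain p where p: "affine_rescale l1 l2 w ws p = q"
    using surj_affine_rescale[OF assms(1)] by (metis surjD)
  have "ereal (1 / (l1 * l2)) * h q + ereal (rescale_correction l1 l2 w ws p)
      = ereal (1 / (l1 * l2)) * f q + ereal (rescale_correction l1 l2 w ws p)"
    using fun_cong[OF assms(2), of p] unfolding rescale_pullback_def p .
  moreover have "0 < 1 / (l1 * l2)" using assms(1) by simp
  ultimately show "h q = f q" using ereal_mult_add_cancel by blast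
qed

theorem proposition3p2:
  fixes A :: "('a::banach \<times> ('a \<Rightarrow>\<^sub>L real)) set"
    and l1 l2 :: real and w :: 'a and ws :: "'a \<Rightarrow>\<^sub>L real"
  assumes "maximal_monotone A"
    and "representative_functions A = {fitzpatrick A}"
    and "l1 > 0" and "l2 > 0"
  shows "maximal_monotone ((\<lambda>(x, xs). (l1 *\<^sub>R x - w, l2 *\<^sub>R xs - ws)) ` A)
     \<and> representative_functions ((\<lambda>(x, xs). (l1 *\<^sub>R x - w, l2 *\<^sub>R xs - ws)) ` A)
         = {fitzpatrick ((\<lambda>(x, xs). (l1 *\<^sub>R x - w, l2 *\<^sub>R xs - ws)) ` A)}"
proof -
  let ?B = "affine_rescale l1 l2 w ws ` A"
  have l: "0 < l1 * l2" using assms(3,4) by simp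
  have max_B: "maximal_monotone ?B"
    using maximal_monotone_affine_rescale[OF assms(1) l] .
  have pullback_eq: "rescale_pullback l1 l2 w ws h = fitzpatrick A"
    if "h \<in> representative_functions ?B" for h
    using rescale_pullback_in_representative_functions[OF l that] assms(2) by blast
  have "representative_functions ?B = {fitzpatrick ?B}"
  proof (intro equalityI subsetI)
    fix h assume "h \<in> representative_functions ?B"
    then have "rescale_pullback l1 l2 w ws h = rescale_pullback l1 l2 w ws (fitzpatrick ?B)"
      using pullback_eq fitzpatrick_in_representative_functions[OF max_B] by simp
    then show "h \<in> {fitzpatrick ?B}" by (auto dest: rescale_pullback_inject[OF l])
  qed (simp add: fitzpatrick_in_representative_functions[OF max_B])
  with max_B show ?thesis unfolding affine_rescale_def by simp
qed

end
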